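(* Let $b>0$, $\zeta>0$, $T>0$. Let $w:[0,T]\to[0,\infty)$ be a measurable, locally integrable function, $\mathcal Y:[0,T+b^{-1}]\to\mathbb R$ a function, and $E(u,t)\in\mathbb R$ for $0\le u\le t\le T$, such that for all $0\le u\le t\le T$, $w(t)\le w(u)-\frac b2\int_u^t w(s)\,ds+E(u,t)+\mathcal Y(t)-\mathcal Y(u)$. Assume further (i) $w(0)\le\zeta/2$; (ii) $\mathcal Y(t+s)-\mathcal Y(t)\le\zeta/8$ for all $t\in[0,T]$, $s\in[0,b^{-1}]$; (iii) $E(u,t)\le\zeta/8$ whenever $0\le t-u\le b^{-1}$. Then $\sup_{t\in[0,T]}w(t)<\zeta$.
   Context: In the paper this is applied with $w(t)=\|\mathbf w(t)\|$ the norm of the weighted amplitude of the stochastic CRN, $\mathcal Y$ a martingale noise term, and $E(u,t)$ an error term of order $\Omega^{-2}\mathcal M_{u,t}$ with $\mathcal M_{u,t}$ the number of reactions in $[u,t]$. *)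

theory Defs
  imports "HOL-Analysis.Analysis"
begin

end

theory Submission
  imports Defs
begin

text \<open>
  Fix a threshold \<open>a\<close> strictly between \<open>2\<zeta>/3\<close> and \<open>3\<zeta>/4\<close>. Every \<open>t\<close> has a point
  \<open>s \<le> t\<close> within one window \<open>1/b\<close> where \<open>w s \<le> a\<close>: otherwise, starting just before the last
  such point, \<open>w\<close> stays above \<open>a\<close> for most of a full window, and the dissipation term
  \<open>b/2 \<integral> w \<ge> 3a/8\<close> outweighs the perturbation \<open>E + \<Delta>Y \<le> \<zeta>/4\<close>, pushing \<open>w\<close> back below \<open>a\<close>
  inside that window. Applying the inequality from that point \<open>s\<close> to \<open>t\<close> then gives
  \<open>w t \<le> a + \<zeta>/4 < \<zeta>\<close>.
\<close>

lemma set_integral_ge_on_final_segment: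
  fixes w :: "real \<Rightarrow> real" and s S t a :: real
  assumes integrable: "set_integrable lborel {s..t} w"
    and nonneg: "\<And>x. x \<in> {s..t} \<Longrightarrow> w x \<ge> 0"
    and above: "\<And>x. x \<in> {S<..t} \<Longrightarrow> w x \<ge> a"
    and "s \<le> S" "S \<le> t"
  shows "(LINT x:{s..t}|lborel. w x) \<ge> a * (t - S)"
proof -
  have split: "{s..t} = {s..S} \<union> {S<..t}" using \<open>s \<le> S\<close> \<open>S \<le> t\<close> by auto
  have int_head: "set_integrable lborel {s..S} w"
    by (rule set_integrable_subset[OF integrable]) (use \<open>S \<le> t\<close> in auto)
  have int_tail: "set_integrable lborel {S<..t} w"
    by (rule set_integrable_subset[OF integrable]) (use \<open>s \<le> S\<close> in auto)
  have int_const: "set_integrable lborel {S<..t} (\<lambda>_. a)"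
  proof -
    have "integrable lborel (\<lambda>x. a * indicator {S<..t} x)"
      by (intro integrable_mult_right integrable_real_indicator) (use \<open>S \<le> t\<close> in auto)
    then show ?thesis unfolding set_integrable_def by (simp add: mult.commute)
  qed
  have "(LINT x:{s..t}|lborel. w x) = (LINT x:{s..S}|lborel. w x) + (LINT x:{S<..t}|lborel. w x)"
    unfolding split by (rule set_integral_Un) (auto intro: int_head int_tail)
  moreover have "(LINT x:{s..S}|lborel. w x) \<ge> 0"
    unfolding set_lebesgue_integral_def
    by (rule Bochner_Integration.integral_nonneg) (use nonneg \<open>S \<le> t\<close> in \<open>auto simp: indicator_def\<close>)
  moreover have "(LINT x:{S<..t}|lborel. w x) \<ge> (LINT x:{S<..t}|lborel. a)"
    by (rule set_integral_mono[OF int_const int_tail]) (use above in auto)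
  moreover have "(LINT x:{S<..t}|lborel. a) = (t - S) * a"
    using \<open>S \<le> t\<close> by (subst set_integral_const) (auto simp: measure_def)
  ultimately show ?thesis by (simp add: mult.commute)
qed

lemma window_descent:
  fixes w :: "real \<Rightarrow> real" and b a s S r :: real
  assumes "b > 0"
    and integrable: "set_integrable lborel {s..s + 1/b} w"
    and nonneg: "\<And>x. x \<in> {s..s + 1/b} \<Longrightarrow> w x \<ge> 0"
    and above: "\<And>x. x \<in> {S<..s + 1/b} \<Longrightarrow> w x \<ge> a"
    and "s \<le> S" "S < s + 1/(4*b)"
    and low: "w s \<le> a"
    and decay: "w (s + 1/b) \<le> w s - b / 2 * (LINT x:{s..s + 1/b}|lborel. w x) + r"
    and "8 * r < 3 * a"
  shows "w (s + 1/b) < a"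
proof -
  have "a \<ge> 0" using nonneg[of s] low \<open>b > 0\<close> by auto
  have "S \<le> s + 1/b" using \<open>S < s + 1/(4*b)\<close> \<open>b > 0\<close> by (simp add: field_simps)
  have "3/(4*b) \<le> s + 1/b - S" using \<open>S < s + 1/(4*b)\<close> \<open>b > 0\<close> by (simp add: field_simps)
  then have "a * (3/(4*b)) \<le> a * (s + 1/b - S)" using \<open>a \<ge> 0\<close> by (rule mult_left_mono)
  also have "\<dots> \<le> (LINT x:{s..s + 1/b}|lborel. w x)"
    by (rule set_integral_ge_on_final_segment[OF integrable nonneg above \<open>s \<le> S\<close> \<open>S \<le> s + 1/b\<close>])
  finally have "b / 2 * (a * (3/(4*b))) \<le> b / 2 * (LINT x:{s..s + 1/b}|lborel. w x)"
    using \<open>b > 0\<close> by (intro mult_left_mono) auto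
  moreover have "b / 2 * (a * (3/(4*b))) = 3 * a / 8" using \<open>b > 0\<close> by (simp add: field_simps)
  ultimately show ?thesis using decay low \<open>8 * r < 3 * a\<close> by linarith
qed

locale dissipative_bound =
  fixes b T a c :: real and w :: "real \<Rightarrow> real" and R :: "real \<Rightarrow> real \<Rightarrow> real"
  assumes b_pos: "b > 0"
    and nonneg: "\<And>t. t \<in> {0..T} \<Longrightarrow> w t \<ge> 0"
    and integrable: "set_integrable lborel {0..T} w"
    and decay: "\<And>u t. 0 \<le> u \<Longrightarrow> u \<le> t \<Longrightarrow> t \<le> T \<Longrightarrow>
        w t \<le> w u - b / 2 * (LINT s:{u..t}|lborel. w s) + R u t"
    and R_bound: "\<And>u t. 0 \<le> u \<Longrightarrow> u \<le> t \<Longrightarrow> t \<le> T \<Longrightarrow> t - u \<le> 1/b \<Longrightarrow> R u t \<le> c"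
    and initial: "w 0 \<le> a"
    and threshold: "8 * c < 3 * a"
begin

lemma integrable_subinterval: "0 \<le> u \<Longrightarrow> v \<le> T \<Longrightarrow> set_integrable lborel {u..v} w"
  by (rule set_integrable_subset[OF integrable]) auto

lemma recent_low_point:
  assumes "0 \<le> t" "t \<le> T"
  obtains s where "0 \<le> s" "s \<le> t" "t - s \<le> 1/b" "w s \<le> a"
proof (rule ccontr)
  assume none: "\<not> thesis"
  define A where "A = {s \<in> {0..t}. w s \<le> a}"
  have "0 \<in> A" using \<open>0 \<le> t\<close> initial unfolding A_def by auto
  have bdd: "bdd_above A" unfolding A_def by (rule bdd_aboveI[of _ t]) auto
  define S where "S = Sup A"
  have le_S: "x \<le> S" if "x \<in> A" for x using cSup_upper[OF that bdd] S_def by simp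
  have "S \<le> t - 1/b"
    unfolding S_def
  proof (rule cSup_least)
    show "A \<noteq> {}" using \<open>0 \<in> A\<close> by auto
    fix x assume "x \<in> A" then show "x \<le> t - 1/b" using none that unfolding A_def by force
  qed
  \<comment> \<open>\<open>S\<close> need not be attained, so start the window slightly before it.\<close>
  have "S - 1/(4*b) < S" using b_pos by simp
  then obtain s where "s \<in> A" and near_S: "S - 1/(4*b) < s"
    using less_cSup_iff[of A] \<open>0 \<in> A\<close> bdd unfolding S_def by blast
  then have "0 \<le> s" "w s \<le> a" "s \<le> S" using le_S unfolding A_def by auto
  have "s + 1/b \<le> t" using \<open>s \<le> S\<close> \<open>S \<le> t - 1/b\<close> by simp
  have above: "w x \<ge> a" if "x \<in> {S<..s + 1/b}" for x
  proof (rule ccontr)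
    assume "\<not> a \<le> w x"
    then have "x \<in> A"
      unfolding A_def using that le_S[OF \<open>0 \<in> A\<close>] \<open>s + 1/b \<le> t\<close> by auto
    then show False using le_S that by force
  qed
  have "set_integrable lborel {s..s + 1/b} w"
    using integrable_subinterval \<open>0 \<le> s\<close> \<open>s + 1/b \<le> t\<close> \<open>t \<le> T\<close> by simp
  moreover have "\<And>x. x \<in> {s..s + 1/b} \<Longrightarrow> w x \<ge> 0"
    using nonneg \<open>0 \<le> s\<close> \<open>s + 1/b \<le> t\<close> \<open>t \<le> T\<close> by simp
  moreover have "S < s + 1/(4*b)" using near_S by simp
  moreover have "w (s + 1/b) \<le> w s - b / 2 * (LINT x:{s..s + 1/b}|lborel. w x) + c"
    using decay[of s "s + 1/b"] R_bound[of s "s + 1/b"]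
      \<open>0 \<le> s\<close> \<open>s + 1/b \<le> t\<close> \<open>t \<le> T\<close> b_pos by simp
  ultimately have "w (s + 1/b) < a"
    using window_descent b_pos above \<open>s \<le> S\<close> \<open>w s \<le> a\<close> threshold by blast
  then have "s + 1/b \<in> A" unfolding A_def using \<open>0 \<le> s\<close> \<open>s + 1/b \<le> t\<close> b_pos by simp
  then show False using le_S[of "s + 1/b"] near_S b_pos by (simp add: field_simps)
qed

lemma bounded: "t \<in> {0..T} \<Longrightarrow> w t \<le> a + c"
proof -
  assume "t \<in> {0..T}"
  then obtain s where s: "0 \<le> s" "s \<le> t" "t - s \<le> 1/b" "w s \<le> a"
    using recent_low_point by auto
  have "(LINT x:{s..t}|lborel. w x) \<ge> 0"
    unfolding set_lebesgue_integral_def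
    by (rule Bochner_Integration.integral_nonneg) (use nonneg s \<open>t \<in> {0..T}\<close> in \<open>auto simp: indicator_def\<close>)
  then have "b / 2 * (LINT x:{s..t}|lborel. w x) \<ge> 0" using b_pos by simp
  then show "w t \<le> a + c"
    using decay[of s t] R_bound[of s t] s \<open>t \<in> {0..T}\<close> by auto
qed

end

theorem mainTheorem4:
  fixes b \<zeta> T :: real
    and w :: "real \<Rightarrow> real"
    and Y :: "real \<Rightarrow> real"
    and E :: "real \<Rightarrow> real \<Rightarrow> real"
  assumes b_pos: "b > 0" and zeta_pos: "\<zeta> > 0" and T_pos: "T > 0"
    and w_nonneg: "\<And>t. t \<in> {0..T} \<Longrightarrow> w t \<ge> 0"
    and w_meas: "set_borel_measurable lborel {0..T} w"
    and w_int: "set_integrable lborel {0..T} w"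
    and ineq: "\<And>u t. 0 \<le> u \<Longrightarrow> u \<le> t \<Longrightarrow> t \<le> T \<Longrightarrow>
        w t \<le> w u - b / 2 * (LINT s:{u..t}|lborel. w s) + E u t + Y t - Y u"
    and init: "w 0 \<le> \<zeta> / 2"
    and Ybound: "\<And>t s. t \<in> {0..T} \<Longrightarrow> s \<in> {0..1/b} \<Longrightarrow> Y (t + s) - Y t \<le> \<zeta> / 8"
    and Ebound: "\<And>u t. 0 \<le> u \<Longrightarrow> u \<le> t \<Longrightarrow> t \<le> T \<Longrightarrow> t - u \<le> 1/b \<Longrightarrow> E u t \<le> \<zeta> / 8"
  shows "(SUP t\<in>{0..T}. ereal (w t)) < ereal \<zeta>"
proof -
  interpret dissipative_bound b T "7 * \<zeta> / 10" "\<zeta> / 4" w "\<lambda>u t. E u t + Y t - Y u"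
  proof
    fix u t :: real assume "0 \<le> u" "u \<le> t" "t \<le> T" "t - u \<le> 1/b"
    then show "E u t + Y t - Y u \<le> \<zeta> / 4"
      using Ebound[of u t] Ybound[of u "t - u"] by auto
  qed (use b_pos w_nonneg w_int ineq init zeta_pos in \<open>auto simp: algebra_simps\<close>)
  have "(SUP t\<in>{0..T}. ereal (w t)) \<le> ereal (7 * \<zeta> / 10 + \<zeta> / 4)"
    by (rule SUP_least) (use bounded in auto)
  also have "\<dots> < ereal \<zeta>" using zeta_pos by simp
  finally show ?thesis .
qed

end
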